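(* Let $D=(V,A)$ be a directed graph with $n=|V|$, $r\in V$, and let $(x,f)$ be a feasible solution of (Const-DRAT). Let $S=\{v:x_v>0\}$, $S_1=\{v\in S:x_v\ge n^{-1/3}\}$, $U=\{v\in S:x_v\ge n^{-2/3}\}$, $U'=S\setminus U$, and let $EX$ be the set of $v\in S_1$ such that there is no directed path from $r$ to $v$ in $D[U]$. For $v\in EX$ let $X_v$ be the set of $w\in U'$ such that there is a directed path from $w$ to $v$ in $D[U\cup\{w\}]$. Then $|X_v|\ge n^{1/3}$ for every $v\in EX$.
   Context: $\mathcal P_v$ is the set of simple directed paths from $r$ to $v$. (Const-DRAT), with node costs $c_v\ge0$, prizes $p_v\ge0$ and parameters $B,Q$: $\sum_v x_vp_v\ge Q$; $\sum_v x_vc_v\le B$; $\sum_{P\in\mathcal P_v}f^v_P=x_v$ ($v\ne r$); $\sum_{P\in\mathcal P_v:w\in P}f^v_P\le x_w$ ($v\ne r$, $w\ne v$); $0\le x_v\le1$; $0\le f^v_P\le1$. $D[W]$ denotes the induced subgraph. *)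

theory Defs
  imports Complex_Main
begin

definition is_dpath :: "('a \<times> 'a) set \<Rightarrow> 'a list \<Rightarrow> bool" where
  "is_dpath A p \<longleftrightarrow> p \<noteq> [] \<and> (\<forall>i. Suc i < length p \<longrightarrow> (p ! i, p ! Suc i) \<in> A)"

definition simple_paths :: "'a set \<Rightarrow> ('a \<times> 'a) set \<Rightarrow> 'a \<Rightarrow> 'a \<Rightarrow> 'a list set" where
  "simple_paths V A r v = {p. is_dpath A p \<and> distinct p \<and> set p \<subseteq> V \<and> hd p = r \<and> last p = v}"

definition induced_arcs :: "('a \<times> 'a) set \<Rightarrow> 'a set \<Rightarrow> ('a \<times> 'a) set" where
  "induced_arcs A W = A \<inter> (W \<times> W)"

definition has_path_in :: "('a \<times> 'a) set \<Rightarrow> 'a set \<Rightarrow> 'a \<Rightarrow> 'a \<Rightarrow> bool" where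
  "has_path_in A W a b \<longleftrightarrow>
     (\<exists>p. is_dpath (induced_arcs A W) p \<and> set p \<subseteq> W \<and> hd p = a \<and> last p = b)"

text \<open>Feasibility for (Const-DRAT); f v P is the variable f^v_P.\<close>
definition const_drat_feasible ::
  "'a set \<Rightarrow> ('a \<times> 'a) set \<Rightarrow> 'a \<Rightarrow> ('a \<Rightarrow> real) \<Rightarrow> ('a \<Rightarrow> real) \<Rightarrow> real \<Rightarrow> real
   \<Rightarrow> ('a \<Rightarrow> real) \<Rightarrow> ('a \<Rightarrow> 'a list \<Rightarrow> real) \<Rightarrow> bool" where
  "const_drat_feasible V A r c p B Q x f \<longleftrightarrow>
     (\<Sum>v\<in>V. x v * p v) \<ge> Q \<and>
     (\<Sum>v\<in>V. x v * c v) \<le> B \<and>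
     (\<forall>v\<in>V - {r}. (\<Sum>P\<in>simple_paths V A r v. f v P) = x v) \<and>
     (\<forall>v\<in>V - {r}. \<forall>w\<in>V - {v}.
        (\<Sum>P\<in>{P\<in>simple_paths V A r v. w \<in> set P}. f v P) \<le> x w) \<and>
     (\<forall>v\<in>V. 0 \<le> x v \<and> x v \<le> 1) \<and>
     (\<forall>v\<in>V - {r}. \<forall>P\<in>simple_paths V A r v. 0 \<le> f v P \<and> f v P \<le> 1)"

end

theory Submission
  imports Defs
begin

text \<open>Every vertex of a simple r-v path that carries positive flow f^v_P has positive x, so
  such a path lies in S. If v is not reachable from r inside D[U], the path leaves U, and its
  last vertex w outside U lies in U' and reaches v inside D[U \<union> {w}], i.e. w \<in> X_v. Hence
  X_v meets every path with positive flow, and the capacity constraints give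
  n^{-1/3} \<le> x_v \<le> \<Sum>_{w \<in> X_v} x_w \<le> |X_v| n^{-2/3}.\<close>

lemma finite_simple_paths: "finite V \<Longrightarrow> finite (simple_paths V A r v)"
  by (rule finite_subset[OF _ finite_subset_distinct]) (auto simp: simple_paths_def)

lemma is_dpath_drop:
  assumes "is_dpath A P" "i < length P"
  shows "is_dpath A (drop i P)"
  unfolding is_dpath_def
proof (intro conjI allI impI)
  show "drop i P \<noteq> []" using assms(2) by simp
  fix k assume "Suc k < length (drop i P)"
  then have "(P ! (i + k), P ! Suc (i + k)) \<in> A" using assms(1) unfolding is_dpath_def by simp
  then show "(drop i P ! k, drop i P ! Suc k) \<in> A" using assms(2) by simp
qed

lemma is_dpath_induced_arcs:
  assumes "is_dpath A P" "set P \<subseteq> W"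
  shows "is_dpath (induced_arcs A W) P"
  using assms unfolding is_dpath_def induced_arcs_def
  by (meson IntI Suc_lessD mem_Sigma_iff nth_mem subsetD)

lemma has_path_in_from_last_exit:
  assumes dp: "is_dpath A P" and leaves: "\<not> set P \<subseteq> U" and last_in: "last P \<in> U"
  shows "\<exists>w \<in> set P - U. has_path_in A (U \<union> {w}) w (last P)"
proof -
  define J where "J = {j. j < length P \<and> P ! j \<notin> U}"
  have "J \<noteq> {}" using leaves by (auto simp: J_def in_set_conv_nth)
  moreover have "finite J" by (simp add: J_def)
  ultimately have "Max J \<in> J" by (rule Max_in[rotated])
  define i where "i = Max J"
  have i: "i < length P" "P ! i \<notin> U" using \<open>Max J \<in> J\<close> by (auto simp: i_def J_def)
  have after_i: "P ! k \<in> U" if "i < k" "k < length P" for k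
    using that Max_ge[OF \<open>finite J\<close>, of k] unfolding i_def J_def
    by (metis (no_types, lifting) leD mem_Collect_eq)
  define q where "q = drop i P"
  have "set q \<subseteq> U \<union> {P ! i}"
  proof
    fix y assume "y \<in> set q"
    then obtain k where "k < length P - i" "y = P ! (i + k)"
      using i(1) by (auto simp: q_def in_set_conv_nth)
    then show "y \<in> U \<union> {P ! i}" using after_i[of "i + k"] by (cases k) auto
  qed
  moreover have "hd q = P ! i" "last q = last P" using i(1) by (auto simp: q_def hd_drop_conv_nth)
  moreover have "is_dpath (induced_arcs A (U \<union> {P ! i})) q"
    using is_dpath_induced_arcs[OF is_dpath_drop[OF dp i(1)]] calculation(1) by (simp add: q_def)
  ultimately have "has_path_in A (U \<union> {P ! i}) (P ! i) (last P)"
    unfolding has_path_in_def by blast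
  then show ?thesis using i by (metis DiffI nth_mem)
qed

lemma sum_le_sum_over_hitting_set:
  fixes g :: "'p \<Rightarrow> real"
  assumes "finite Ps" "finite X"
    and nonneg: "\<And>P. P \<in> Ps \<Longrightarrow> 0 \<le> g P"
    and hits: "\<And>P. P \<in> Ps \<Longrightarrow> g P > 0 \<Longrightarrow> \<exists>w \<in> X. w \<in> M P"
  shows "(\<Sum>P\<in>Ps. g P) \<le> (\<Sum>w\<in>X. \<Sum>P\<in>{P\<in>Ps. w \<in> M P}. g P)"
proof -
  have "g P \<le> (\<Sum>w\<in>X. if w \<in> M P then g P else 0)" if "P \<in> Ps" for P
  proof (cases "g P > 0")
    case True
    then obtain w where "w \<in> X" "w \<in> M P" using hits \<open>P \<in> Ps\<close> by blast
    then show ?thesis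
      using member_le_sum[of w X "\<lambda>w. if w \<in> M P then g P else 0"] nonneg[OF that] \<open>finite X\<close>
      by auto
  next
    case False
    then show ?thesis using nonneg[OF that] by (auto intro: sum_nonneg)
  qed
  then have "(\<Sum>P\<in>Ps. g P) \<le> (\<Sum>P\<in>Ps. \<Sum>w\<in>X. if w \<in> M P then g P else 0)"
    by (rule sum_mono)
  also have "\<dots> = (\<Sum>w\<in>X. \<Sum>P\<in>{P\<in>Ps. w \<in> M P}. g P)"
    using \<open>finite Ps\<close> by (subst sum.swap) (simp add: sum.inter_filter)
  finally show ?thesis .
qed

lemma const_drat_feasible_flow_support:
  assumes feas: "const_drat_feasible V A r c p B Q x f" and "finite V"
    and v: "v \<in> V - {r}" and P: "P \<in> simple_paths V A r v" and pos: "f v P > 0"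
    and w: "w \<in> set P"
  shows "x w > 0"
proof -
  let ?SP = "simple_paths V A r v"
  have fin: "finite ?SP" using \<open>finite V\<close> by (rule finite_simple_paths)
  have nonneg: "\<forall>P'\<in>?SP. 0 \<le> f v P'"
    using feas v unfolding const_drat_feasible_def by blast
  show ?thesis
  proof (cases "w = v")
    case True
    have "f v P \<le> (\<Sum>P'\<in>?SP. f v P')" using fin nonneg P by (intro member_le_sum) auto
    also have "\<dots> = x v" using feas v unfolding const_drat_feasible_def by blast
    finally show ?thesis using pos True by simp
  next
    case False
    have "w \<in> V - {v}" using P w False by (auto simp: simple_paths_def)
    have "f v P \<le> (\<Sum>P'\<in>{P'\<in>?SP. w \<in> set P'}. f v P')"
      using fin nonneg P w by (intro member_le_sum) auto
    also have "\<dots> \<le> x w"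
      using feas v \<open>w \<in> V - {v}\<close> unfolding const_drat_feasible_def by blast
    finally show ?thesis using pos by simp
  qed
qed

lemma const_drat_feasible_hitting_set_bound:
  assumes feas: "const_drat_feasible V A r c p B Q x f" and "finite V"
    and v: "v \<in> V - {r}" and X: "X \<subseteq> V - {v}"
    and hits: "\<And>P. P \<in> simple_paths V A r v \<Longrightarrow> f v P > 0 \<Longrightarrow> \<exists>w \<in> X. w \<in> set P"
    and small: "\<And>w. w \<in> X \<Longrightarrow> x w \<le> t"
  shows "x v \<le> real (card X) * t"
proof -
  let ?SP = "simple_paths V A r v"
  have "finite X" using X \<open>finite V\<close> by (meson finite_Diff finite_subset)
  have "x v = (\<Sum>P\<in>?SP. f v P)" using feas v unfolding const_drat_feasible_def by simp
  also have "\<dots> \<le> (\<Sum>w\<in>X. \<Sum>P\<in>{P\<in>?SP. w \<in> set P}. f v P)"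
    using feas v \<open>finite X\<close> hits finite_simple_paths[OF \<open>finite V\<close>]
    by (intro sum_le_sum_over_hitting_set) (auto simp: const_drat_feasible_def)
  also have "\<dots> \<le> (\<Sum>w\<in>X. t)"
  proof (rule sum_mono)
    fix w assume "w \<in> X"
    then have "(\<Sum>P\<in>{P\<in>?SP. w \<in> set P}. f v P) \<le> x w"
      using feas v X unfolding const_drat_feasible_def by blast
    then show "(\<Sum>P\<in>{P\<in>?SP. w \<in> set P}. f v P) \<le> t" using small[OF \<open>w \<in> X\<close>] by simp
  qed
  finally show ?thesis by simp
qed

lemma powr_third_le_of_le_mult:
  fixes n k :: real
  assumes "n > 0" "n powr (-1/3) \<le> k * n powr (-2/3)"
  shows "n powr (1/3) \<le> k"
proof -
  have "n powr (-1/3) = n powr (1/3) * n powr (-2/3)"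
    using \<open>n > 0\<close> by (simp flip: powr_add)
  then show ?thesis using assms by simp
qed

theorem claim2:
  fixes V :: "'a set" and A :: "('a \<times> 'a) set" and r :: 'a
    and c p x :: "'a \<Rightarrow> real" and B Q :: real and f :: "'a \<Rightarrow> 'a list \<Rightarrow> real"
  assumes finV: "finite V"
    and arcs: "A \<subseteq> V \<times> V"
    and rV: "r \<in> V"
    and c_nonneg: "\<forall>v\<in>V. c v \<ge> 0"
    and p_nonneg: "\<forall>v\<in>V. p v \<ge> 0"
    and feas: "const_drat_feasible V A r c p B Q x f"
  defines "n \<equiv> real (card V)"
  defines "S \<equiv> {v\<in>V. x v > 0}"
  defines "S1 \<equiv> {v\<in>S. x v \<ge> n powr (-1/3)}"
  defines "U \<equiv> {v\<in>S. x v \<ge> n powr (-2/3)}"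
  defines "U' \<equiv> S - U"
  defines "Ex_set \<equiv> {v\<in>S1. \<not> has_path_in A U r v}"
  defines "X \<equiv> (\<lambda>v. {w\<in>U'. has_path_in A (U \<union> {w}) w v})"
  shows "\<forall>v\<in>Ex_set. real (card (X v)) \<ge> n powr (1/3)"
proof
  fix v assume "v \<in> Ex_set"
  have n_pos: "n > 0" using finV rV by (auto simp: n_def card_gt_0_iff)
  then have "n powr (-2/3) \<le> n powr (-1/3)" by (intro powr_mono) (auto simp: n_def)
  then have v: "v \<in> V" "v \<in> U" "x v \<ge> n powr (-1/3)" "\<not> has_path_in A U r v"
    using \<open>v \<in> Ex_set\<close> by (auto simp: Ex_set_def S1_def U_def S_def)
  have "v \<noteq> r"
  proof
    assume "v = r"
    then have "has_path_in A U r v"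
      using v(2) unfolding has_path_in_def is_dpath_def by (intro exI[of _ "[r]"]) auto
    with v(4) show False by contradiction
  qed
  have "X v \<subseteq> V - {v}" using v(2) by (auto simp: X_def U'_def S_def)
  moreover have "\<exists>w \<in> X v. w \<in> set P"
    if P: "P \<in> simple_paths V A r v" and pos: "f v P > 0" for P
  proof -
    have "set P \<subseteq> S" using const_drat_feasible_flow_support[OF feas finV _ P pos] v(1) \<open>v \<noteq> r\<close> P
      by (auto simp: S_def simple_paths_def)
    have "\<not> set P \<subseteq> U"
      using is_dpath_induced_arcs[of A P U] P v(4) by (auto simp: has_path_in_def simple_paths_def)
    with P v(2) obtain w where "w \<in> set P - U" "has_path_in A (U \<union> {w}) w v"
      using has_path_in_from_last_exit[of A P U] by (auto simp: simple_paths_def)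
    then show ?thesis using \<open>set P \<subseteq> S\<close> by (auto simp: X_def U'_def)
  qed
  moreover have "x w \<le> n powr (-2/3)" if "w \<in> X v" for w
    using that by (auto simp: X_def U'_def U_def S_def)
  ultimately have "x v \<le> real (card (X v)) * n powr (-2/3)"
    using const_drat_feasible_hitting_set_bound[OF feas finV] v(1) \<open>v \<noteq> r\<close> by blast
  then show "real (card (X v)) \<ge> n powr (1/3)"
    by (intro powr_third_le_of_le_mult[OF n_pos] order.trans[OF v(3)])
qed

end
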